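(* Let $G=(V,E)$ be a finite simple undirected graph, $G_0:=G$, and let $W_1,\dots,W_r$ be distinct subsets of $V$ such that for every $t\in\{1,\dots,r\}$, $W_t$ is a clique of $G_{t-1}$ with $|W_t|\ge2$ and $G_t:=G_{t-1}\mid W_t$. Let $k>0$ and suppose that for all $t\in\{1,\dots,r\}$, $|W_t|=k$ and the subgraph of $G_{t-1}$ induced by $\bigcup_{i=1}^tW_i$ is $k$-partite with vertex classes $V_t^1,\dots,V_t^k$. Then $|W_\ell\cap V_t^i|=1$ for all $t\in\{1,\dots,r\}$, $\ell\in\{1,\dots,t\}$ and $i\in\{1,\dots,k\}$.
   Context: The clique projection of a clique $W$ ($|W|\ge2$) of a graph $H=(V,E_H)$ is $H\mid W=(V,E_H\cup\{uv\notin E_H\mid u\ne v,\ W\subseteq N_H(u)\cup N_H(v)\})$, where $N_H(u)$ is the neighborhood of $u$ in $H$. "$k$-partite with vertex classes $V_t^1,\dots,V_t^k$" means these sets partition the vertex set of the induced subgraph and each is a stable set in it. *)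

theory Defs
  imports Main
begin

definition simple_graph :: "'a set \<Rightarrow> 'a set set \<Rightarrow> bool" where
  "simple_graph V E \<longleftrightarrow> finite V \<and> (\<forall>e\<in>E. \<exists>u v. u \<in> V \<and> v \<in> V \<and> u \<noteq> v \<and> e = {u, v})"

definition nbhd :: "'a set set \<Rightarrow> 'a \<Rightarrow> 'a set" where
  "nbhd E u = {v. {u, v} \<in> E}"

definition is_clique :: "'a set \<Rightarrow> 'a set set \<Rightarrow> 'a set \<Rightarrow> bool" where
  "is_clique V E W \<longleftrightarrow> W \<subseteq> V \<and> (\<forall>u\<in>W. \<forall>v\<in>W. u \<noteq> v \<longrightarrow> {u, v} \<in> E)"

definition clique_proj :: "'a set \<Rightarrow> 'a set set \<Rightarrow> 'a set \<Rightarrow> 'a set set" where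
  "clique_proj V E W = E \<union> {{u, v} | u v. u \<in> V \<and> v \<in> V \<and> u \<noteq> v \<and> {u, v} \<notin> E
      \<and> W \<subseteq> nbhd E u \<union> nbhd E v}"

primrec proj_seq :: "'a set \<Rightarrow> 'a set set \<Rightarrow> (nat \<Rightarrow> 'a set) \<Rightarrow> nat \<Rightarrow> 'a set set" where
  "proj_seq V E W 0 = E"
| "proj_seq V E W (Suc t) = clique_proj V (proj_seq V E W t) (W (Suc t))"

definition k_partite_with :: "'a set set \<Rightarrow> 'a set \<Rightarrow> nat \<Rightarrow> (nat \<Rightarrow> 'a set) \<Rightarrow> bool" where
  "k_partite_with E U k C \<longleftrightarrow>
     (\<Union>i\<in>{1..k}. C i) = U
   \<and> (\<forall>i\<in>{1..k}. \<forall>j\<in>{1..k}. i \<noteq> j \<longrightarrow> C i \<inter> C j = {})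
   \<and> (\<forall>i\<in>{1..k}. \<forall>u\<in>C i. \<forall>v\<in>C i. {u, v} \<notin> E)"

end

theory Submission
  imports Defs
begin

text \<open>Clique projections only add edges, so the clique W_l of G_(l-1) stays a clique of
  every later G_(t-1). A clique meets each stable class in at most one vertex, and the k
  classes cover the k vertices of W_l, so by counting each class meets W_l exactly once.\<close>

lemma proj_seq_mono: "s \<le> s' \<Longrightarrow> proj_seq V E W s \<subseteq> proj_seq V E W s'"
proof (induction s')
  case (Suc s')
  then show ?case by (cases "s = Suc s'") (auto simp: clique_proj_def)
qed simp

lemma is_clique_mono: "is_clique V E W \<Longrightarrow> E \<subseteq> E' \<Longrightarrow> is_clique V E' W"
  unfolding is_clique_def by blast

lemma card_clique_inter_stable_le_1:
  assumes "is_clique V E W" and "\<forall>u\<in>S. \<forall>v\<in>S. {u, v} \<notin> E"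
  shows "card (W \<inter> S) \<le> 1"
proof (cases "finite (W \<inter> S)")
  case True
  have "\<forall>x\<in>W \<inter> S. \<forall>y\<in>W \<inter> S. x = y"
    using assms unfolding is_clique_def by blast
  with True show ?thesis by (simp add: card_le_Suc0_iff_eq)
qed simp

lemma sum_le_1_eq_card_imp_eq_1:
  fixes f :: "'i \<Rightarrow> nat"
  assumes "finite I" and "\<forall>i\<in>I. f i \<le> 1" and "sum f I = card I" and "i \<in> I"
  shows "f i = 1"
proof (rule ccontr)
  assume "f i \<noteq> 1"
  with assms(2,4) have "f i < 1" by fastforce
  with assms have "sum f I < sum (\<lambda>_. 1) I"
    by (intro sum_strict_mono_ex1) auto
  with assms(3) show False by simp
qed

lemma card_inter_classes_eq_1:
  assumes "finite A" and "finite I" and "A \<subseteq> (\<Union>i\<in>I. P i)"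
    and "\<forall>i\<in>I. \<forall>j\<in>I. i \<noteq> j \<longrightarrow> P i \<inter> P j = {}"
    and "\<forall>i\<in>I. card (A \<inter> P i) \<le> 1" and "card A = card I" and "i \<in> I"
  shows "card (A \<inter> P i) = 1"
proof -
  have "A = (\<Union>j\<in>I. A \<inter> P j)" using assms(3) by blast
  also have "card \<dots> = (\<Sum>j\<in>I. card (A \<inter> P j))"
    by (rule card_UN_disjoint) (use assms(1,2,4) in auto)
  finally have "card A = (\<Sum>j\<in>I. card (A \<inter> P j))" .
  with assms show ?thesis by (intro sum_le_1_eq_card_imp_eq_1[where f = "\<lambda>j. card (A \<inter> P j)"]) auto
qed

theorem lemma8:
  fixes V :: "'a set" and E :: "'a set set" and W :: "nat \<Rightarrow> 'a set"
    and r k :: nat and C :: "nat \<Rightarrow> nat \<Rightarrow> 'a set"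
  assumes "simple_graph V E"
    and "inj_on W {1..r}"
    and "\<forall>t\<in>{1..r}. is_clique V (proj_seq V E W (t - 1)) (W t) \<and> card (W t) \<ge> 2"
    and "k > 0"
    and "\<forall>t\<in>{1..r}. card (W t) = k"
    and "\<forall>t\<in>{1..r}. k_partite_with (proj_seq V E W (t - 1)) (\<Union>i\<in>{1..t}. W i) k (C t)"
  shows "\<forall>t\<in>{1..r}. \<forall>l\<in>{1..t}. \<forall>i\<in>{1..k}. card (W l \<inter> C t i) = 1"
proof (intro ballI)
  fix t l i assume t: "t \<in> {1..r}" and l: "l \<in> {1..t}" and i: "i \<in> {1..k}"
  let ?G = "proj_seq V E W (t - 1)"
  have "l \<in> {1..r}" using t l by simp
  then have card_W: "card (W l) = k" and clique_l: "is_clique V (proj_seq V E W (l - 1)) (W l)"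
    using assms(3,5) by blast+
  have "proj_seq V E W (l - 1) \<subseteq> ?G"
    using l by (intro proj_seq_mono) auto
  with clique_l have clique: "is_clique V ?G (W l)"
    by (rule is_clique_mono)
  have partite: "k_partite_with ?G (\<Union>i\<in>{1..t}. W i) k (C t)"
    using assms(6) t by blast
  show "card (W l \<inter> C t i) = 1"
  proof (rule card_inter_classes_eq_1[where I = "{1..k}"])
    show "finite (W l)" using card_W assms(4) card_ge_0_finite by metis
    show "\<forall>j\<in>{1..k}. card (W l \<inter> C t j) \<le> 1"
      using partite clique unfolding k_partite_with_def by (metis card_clique_inter_stable_le_1)
  qed (use partite l card_W i in \<open>auto simp: k_partite_with_def\<close>)
qed

end
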